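(* Under the standing assumptions, for every demand vector $\vec v$ with at least four non-zero entries, there is at most one task of type 1 with respect to $\vec v$.
   Context: Standing assumptions: $n\ge 4$, $k\ge 5$, and $f_1,\dots,f_n$ are functions from demand vectors to $[k]$ satisfying the demand (for every demand vector $\vec v$ and task $j$, exactly $v_j$ agents $a$ have $f_a(\vec v)=j$), with maximum switching cost at most $2$. A demand vector is $\vec v=(v_1,\dots,v_k)$ of non-negative integers with $\sum v_j=n$; task $j$ is non-empty in $\vec v$ if $v_j\ge1$. The switching cost of $(\vec v,\vec v')$ is the number of agents $a$ with $f_a(\vec v)\ne f_a(\vec v')$; $\vec v,\vec v'$ are adjacent if $\|\vec v-\vec v'\|_1=2$. An ordered pair $(\vec v_1,\vec v_2)$ is $(s,t)$-adjacent if $s\ne t$ and $\vec v_2$ is obtained from $\vec v_1$ by moving one unit of demand from task $s$ to task $t$. Agent $a$ is $(i,j)$-mobile with respect to $(\vec v_1,\vec v_2)$ if $f_a(\vec v_1)=i$, $f_a(\vec v_2)=j$, $i\ne j$. If $(\vec v_1,\vec v_2)$ is $(s,t)$-adjacent with switching cost $2$, then there is a task $i\notin\{s,t\}$ such that one switching agent is $(s,i)$-mobile and the other is $(i,t)$-mobile; $i$ is called the intermediate task of $(\vec v_1,\vec v_2)$. A task $t$ is of type 1 with respect to $\vec v$ if for every task $s\ne t$ non-empty in $\vec v$, the $(s,t)$-adjacent pair starting at $\vec v$ has switching cost $1$. A task $t$ is of type 2 with respect to $\vec v$ if there exist a task $i$ and an agent $a$ such that for every task $s\notin\{i,t\}$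 non-empty in $\vec v$, the $(s,t)$-adjacent pair starting at $\vec v$ has switching cost $2$, intermediate task $i$, and $(i,t)$-mobile agent $a$; then $i$ is the intermediate task of $t$ with respect to $\vec v$. *)

theory Defs
  imports Main
begin

text \<open>Tasks are 1..k, agents are 1..n. A demand vector is a function nat => nat
  that vanishes outside 1..k and sums to n over 1..k.
  An assignment is f :: agent => demand vector => task.\<close>

definition demand_vec :: "nat \<Rightarrow> nat \<Rightarrow> (nat \<Rightarrow> nat) \<Rightarrow> bool" where
  "demand_vec n k v \<longleftrightarrow> (\<forall>j. j \<notin> {1..k} \<longrightarrow> v j = 0) \<and> (\<Sum>j\<in>{1..k}. v j) = n"

definition satisfies_demand :: "nat \<Rightarrow> nat \<Rightarrow> (nat \<Rightarrow> (nat \<Rightarrow> nat) \<Rightarrow> nat) \<Rightarrow> bool" where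
  "satisfies_demand n k f \<longleftrightarrow>
     (\<forall>v. demand_vec n k v \<longrightarrow>
        (\<forall>a\<in>{1..n}. f a v \<in> {1..k}) \<and>
        (\<forall>j\<in>{1..k}. card {a\<in>{1..n}. f a v = j} = v j))"

definition switching_cost :: "nat \<Rightarrow> (nat \<Rightarrow> (nat \<Rightarrow> nat) \<Rightarrow> nat) \<Rightarrow> (nat \<Rightarrow> nat) \<Rightarrow> (nat \<Rightarrow> nat) \<Rightarrow> nat" where
  "switching_cost n f v v' = card {a\<in>{1..n}. f a v \<noteq> f a v'}"

definition adjacent :: "nat \<Rightarrow> (nat \<Rightarrow> nat) \<Rightarrow> (nat \<Rightarrow> nat) \<Rightarrow> bool" where
  "adjacent k v v' \<longleftrightarrow> (\<Sum>j\<in>{1..k}. nat \<bar>int (v j) - int (v' j)\<bar>) = 2"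

definition max_switch_le2 :: "nat \<Rightarrow> nat \<Rightarrow> (nat \<Rightarrow> (nat \<Rightarrow> nat) \<Rightarrow> nat) \<Rightarrow> bool" where
  "max_switch_le2 n k f \<longleftrightarrow>
     (\<forall>v v'. demand_vec n k v \<and> demand_vec n k v' \<and> adjacent k v v' \<longrightarrow>
        switching_cost n f v v' \<le> 2)"

text \<open>The demand vector obtained from v by moving one unit of demand from s to t
  (only meaningful when s \<noteq> t and v s \<ge> 1).\<close>
definition move :: "(nat \<Rightarrow> nat) \<Rightarrow> nat \<Rightarrow> nat \<Rightarrow> (nat \<Rightarrow> nat)" where
  "move v s t = v(s := v s - 1, t := v t + 1)"

definition type1 :: "nat \<Rightarrow> nat \<Rightarrow> (nat \<Rightarrow> (nat \<Rightarrow> nat) \<Rightarrow> nat) \<Rightarrow> (nat \<Rightarrow> nat) \<Rightarrow> nat \<Rightarrow> bool" where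
  "type1 n k f v t \<longleftrightarrow>
     (\<forall>s\<in>{1..k}. s \<noteq> t \<and> v s \<ge> 1 \<longrightarrow> switching_cost n f v (move v s t) = 1)"

end

theory Submission
  imports Defs
begin

text \<open>Suppose two distinct tasks T1 and T2 were of type 1. Then for each non-empty task s a
  single agent carries the unit of demand moved from s to T1. Move one unit from a to T1 and one
  from b to T1, then redirect the second unit to a fresh task u. Since adjacent demand vectors
  differ in at most two agents, the two carriers p and q either are relocated onto T1 and u with
  nobody else moving, or both end on T1 while a third agent relays from T1 to u. The type-1 task
  T2 excludes the relay for v - a - b + T1 + u, and comparing adjacent vectors propagates the
  first shape to v - a - c + T1 + u and v - b - c + T1 + u. The three carriers p, q, r would then
  sit pairwise on different tasks of {T1, u} in these three vectors while each of them keeps its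
  task between the two vectors in which it is not a carrier, which is impossible.\<close>

lemma sum_remove_two:
  assumes "finite K" "s \<in> K" "t \<in> K" "s \<noteq> t"
  shows "sum h K = h s + h t + sum h (K - {s} - {t})"
proof -
  have "sum h K = h s + sum h (K - {s})"
    using assms by (simp add: sum.remove)
  also have "sum h (K - {s}) = h t + sum h (K - {s} - {t})"
    using assms by (simp add: sum.remove)
  finally show ?thesis
    by (simp add: add.assoc)
qed

lemma demand_vec_move:
  assumes "demand_vec n k v" "s \<in> {1..k}" "t \<in> {1..k}" "s \<noteq> t" "1 \<le> v s"
  shows "demand_vec n k (move v s t)"
proof -
  let ?w = "move v s t"
  have "sum ?w {1..k} = ?w s + ?w t + sum ?w ({1..k} - {s} - {t})"
    using assms by (intro sum_remove_two) auto
  also have "\<dots> = v s + v t + sum v ({1..k} - {s} - {t})"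
    using assms by (auto simp: move_def intro!: sum.cong)
  also have "\<dots> = sum v {1..k}"
    using assms by (intro sum_remove_two[symmetric]) auto
  finally show ?thesis
    using assms by (auto simp: move_def demand_vec_def)
qed

lemma adjacent_move:
  assumes "s \<in> {1..k}" "t \<in> {1..k}" "s \<noteq> t" "1 \<le> v s"
  shows "adjacent k v (move v s t)"
proof -
  let ?h = "\<lambda>j. nat \<bar>int (v j) - int (move v s t j)\<bar>"
  have "sum ?h {1..k} = ?h s + ?h t + sum ?h ({1..k} - {s} - {t})"
    using assms by (intro sum_remove_two) auto
  also have "\<dots> = 2"
    using assms by (auto simp: move_def intro!: sum.neutral)
  finally show ?thesis
    by (simp add: adjacent_def)
qed

lemma move_move_exchange_targets:
  assumes "distinct [a, b, c, d]"
  shows "move (move v a c) b d = move (move v b c) a d"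
  using assms by (auto simp: move_def fun_eq_iff)

lemma exists_not_in_list:
  assumes "finite A" "length xs < card A"
  shows "\<exists>x\<in>A. x \<notin> set xs"
proof -
  have "\<not> A \<subseteq> set xs"
    using assms card_mono[of "set xs" A] card_length[of xs] by auto
  then show ?thesis
    by blast
qed

locale task_allocation =
  fixes n k :: nat and f :: "nat \<Rightarrow> (nat \<Rightarrow> nat) \<Rightarrow> nat"
  assumes demand: "satisfies_demand n k f"
    and switch_le2: "max_switch_le2 n k f"
begin

lemma card_agents_on_task:
  "demand_vec n k w \<Longrightarrow> j \<in> {1..k} \<Longrightarrow> card {x\<in>{1..n}. f x w = j} = w j"
  using demand by (auto simp: satisfies_demand_def)

lemma agent_leaves_task:
  assumes "demand_vec n k w" "demand_vec n k w'" "j \<in> {1..k}" "w' j < w j"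
  obtains x where "x \<in> {1..n}" "f x w = j" "f x w' \<noteq> j"
proof -
  have "\<not> {x\<in>{1..n}. f x w = j} \<subseteq> {x\<in>{1..n}. f x w' = j}"
  proof
    assume "{x\<in>{1..n}. f x w = j} \<subseteq> {x\<in>{1..n}. f x w' = j}"
    then have "card {x\<in>{1..n}. f x w = j} \<le> card {x\<in>{1..n}. f x w' = j}"
      by (intro card_mono) auto
    then show False
      using assms card_agents_on_task by simp
  qed
  then show ?thesis
    using that by blast
qed

lemma no_three_switchers:
  assumes "demand_vec n k w" "s \<in> {1..k}" "t \<in> {1..k}" "s \<noteq> t" "1 \<le> w s"
    and "x \<in> {1..n}" "y \<in> {1..n}" "z \<in> {1..n}" "distinct [x, y, z]"
    and "f x (move w s t) \<noteq> f x w" "f y (move w s t) \<noteq> f y w"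
  shows "f z (move w s t) = f z w"
proof (rule ccontr)
  assume "f z (move w s t) \<noteq> f z w"
  then have "{x, y, z} \<subseteq> {a\<in>{1..n}. f a w \<noteq> f a (move w s t)}"
    using assms by auto
  then have "card {x, y, z} \<le> switching_cost n f w (move w s t)"
    unfolding switching_cost_def by (intro card_mono) auto
  moreover have "demand_vec n k (move w s t)" "adjacent k w (move w s t)"
    using assms by (simp_all add: demand_vec_move adjacent_move)
  then have "switching_cost n f w (move w s t) \<le> 2"
    using switch_le2 assms(1) unfolding max_switch_le2_def by blast
  ultimately show False
    using assms(9) by simp
qed

definition sole_mover :: "(nat \<Rightarrow> nat) \<Rightarrow> nat \<Rightarrow> nat \<Rightarrow> nat \<Rightarrow> bool" where
  "sole_mover v s t p \<longleftrightarrow> p \<in> {1..n} \<and> f p v = s \<and> f p (move v s t) = t \<and>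
     (\<forall>x\<in>{1..n}. x \<noteq> p \<longrightarrow> f x (move v s t) = f x v)"

lemma type1_sole_mover:
  assumes v: "demand_vec n k v" and t: "type1 n k f v t" "t \<in> {1..k}"
    and s: "s \<in> {1..k}" "s \<noteq> t" "1 \<le> v s"
  obtains p where "sole_mover v s t p"
proof -
  let ?w = "move v s t"
  have w: "demand_vec n k ?w"
    using demand_vec_move v s t by simp
  have "switching_cost n f v ?w = 1"
    using t(1) s unfolding type1_def by (elim ballE) auto
  then have "card {x\<in>{1..n}. f x v \<noteq> f x ?w} = 1"
    unfolding switching_cost_def .
  then obtain p where switchers: "{x\<in>{1..n}. f x v \<noteq> f x ?w} = {p}"
    by (rule card_1_singletonE)
  have "?w s < v s" "v t < ?w t"
    using s by (simp_all add: move_def)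
  obtain x where x: "x \<in> {1..n}" "f x v = s" "f x ?w \<noteq> s"
    using agent_leaves_task[OF v w s(1) \<open>?w s < v s\<close>] by blast
  obtain y where y: "y \<in> {1..n}" "f y ?w = t" "f y v \<noteq> t"
    using agent_leaves_task[OF w v t(2) \<open>v t < ?w t\<close>] by blast
  have only_p: "z = p" if "z \<in> {1..n}" "f z v \<noteq> f z ?w" for z
    using switchers that by blast
  have "x = p" "y = p"
    using only_p x y by metis+
  then have "sole_mover v s t p"
    unfolding sole_mover_def using x y only_p by metis
  then show ?thesis
    by (rule that)
qed

definition pair_relocated ::
    "(nat \<Rightarrow> nat) \<Rightarrow> (nat \<Rightarrow> nat) \<Rightarrow> nat \<Rightarrow> nat \<Rightarrow> nat \<Rightarrow> nat \<Rightarrow> bool" where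
  "pair_relocated v w p q c d \<longleftrightarrow>
     (\<forall>x\<in>{1..n}. x \<noteq> p \<and> x \<noteq> q \<longrightarrow> f x w = f x v) \<and> {f p w, f q w} = {c, d}"

lemma pair_relocated_unchanged:
  "pair_relocated v w p q c d \<Longrightarrow> x \<in> {1..n} \<Longrightarrow> x \<noteq> p \<Longrightarrow> x \<noteq> q \<Longrightarrow> f x w = f x v"
  unfolding pair_relocated_def by blast

lemma pair_relocated_values:
  assumes "pair_relocated v w p q c d" "c \<noteq> d"
  shows "f p w \<in> {c, d}" "f q w \<in> {c, d}" "f p w \<noteq> f q w"
  using assms unfolding pair_relocated_def by (auto simp: doubleton_eq_iff)

end

locale double_move = task_allocation +
  fixes v :: "nat \<Rightarrow> nat" and a b c d p q :: nat
  assumes demand_v: "demand_vec n k v"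
    and tasks: "a \<in> {1..k}" "b \<in> {1..k}" "c \<in> {1..k}" "d \<in> {1..k}"
    and distinct_tasks: "distinct [a, b, c, d]"
    and nonempty: "1 \<le> v a" "1 \<le> v b"
    and mover_a: "sole_mover v a c p"
    and mover_b: "sole_mover v b c q"
begin

abbreviation via_a :: "nat \<Rightarrow> nat" where
  "via_a \<equiv> move v a c"

abbreviation target :: "nat \<Rightarrow> nat" where
  "target \<equiv> move via_a b d"

lemma roles_swapped: "double_move n k f v b a c d q p"
  by unfold_locales (use demand_v tasks distinct_tasks nonempty mover_a mover_b in auto)

lemma target_swapped: "move (move v b c) a d = target"
  using distinct_tasks by (simp add: move_move_exchange_targets)

lemma mover_facts: "p \<in> {1..n}" "f p v = a" "f p via_a = c" "q \<in> {1..n}" "f q v = b" "p \<noteq> q"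
  using mover_a mover_b distinct_tasks unfolding sole_mover_def by auto

lemma via_a_unchanged: "x \<in> {1..n} \<Longrightarrow> x \<noteq> p \<Longrightarrow> f x via_a = f x v"
  using mover_a unfolding sole_mover_def by blast

lemma demand_via_a: "demand_vec n k via_a"
  using demand_vec_move demand_v tasks distinct_tasks nonempty by simp

lemma demand_target: "demand_vec n k target"
proof -
  have "1 \<le> via_a b"
    using nonempty distinct_tasks by (simp add: move_def)
  then show ?thesis
    using demand_vec_move[OF demand_via_a] tasks distinct_tasks by simp
qed

lemma no_three_switchers_to_target:
  assumes "x \<in> {1..n}" "y \<in> {1..n}" "z \<in> {1..n}" "distinct [x, y, z]"
    and "f x target \<noteq> f x via_a" "f y target \<noteq> f y via_a"
  shows "f z target = f z via_a"
proof (rule no_three_switchers[OF demand_via_a _ _ _ _ assms(1-4)])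
  show "1 \<le> via_a b"
    using nonempty distinct_tasks by (simp add: move_def)
qed (use assms(5,6) tasks distinct_tasks in auto)

text \<open>Otherwise p, an agent leaving a and an agent leaving b all switch between via_a and
  target.\<close>

lemma mover_a_leaves_origin: "f p target \<noteq> a"
proof
  assume returns: "f p target = a"
  have drop: "target a < v a" "target b < v b"
    using nonempty distinct_tasks by (simp_all add: move_def)
  obtain la where la: "la \<in> {1..n}" "f la v = a" "f la target \<noteq> a"
    using agent_leaves_task[OF demand_v demand_target tasks(1) drop(1)] by blast
  obtain lb where lb: "lb \<in> {1..n}" "f lb v = b" "f lb target \<noteq> b"
    using agent_leaves_task[OF demand_v demand_target tasks(2) drop(2)] by blast
  have "la \<noteq> p" "lb \<noteq> p" "lb \<noteq> la"
    using returns la lb mover_facts distinct_tasks by auto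
  have "f lb target = f lb via_a"
  proof (rule no_three_switchers_to_target[OF mover_facts(1) la(1) lb(1)])
    show "distinct [p, la, lb]"
      using \<open>la \<noteq> p\<close> \<open>lb \<noteq> p\<close> \<open>lb \<noteq> la\<close> by auto
    show "f p target \<noteq> f p via_a"
      using returns mover_facts(3) distinct_tasks by simp
    show "f la target \<noteq> f la via_a"
      using la via_a_unchanged[OF la(1) \<open>la \<noteq> p\<close>] by simp
  qed
  then show False
    using lb via_a_unchanged \<open>lb \<noteq> p\<close> by simp
qed

lemma mover_b_leaves_origin: "f q target \<noteq> b"
proof -
  interpret swapped: double_move n k f v b a c d q p
    by (rule roles_swapped)
  show ?thesis
    using swapped.mover_a_leaves_origin target_swapped by simp
qed

lemma third_switcher_pins_a:
  assumes "x \<in> {1..n}" "x \<noteq> p" "x \<noteq> q" "f x target \<noteq> f x v"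
  shows "f p target = c"
proof -
  have "f p target = f p via_a"
  proof (rule no_three_switchers_to_target[OF mover_facts(4) assms(1) mover_facts(1)])
    show "distinct [q, x, p]"
      using assms(2,3) mover_facts(6) by auto
    show "f q target \<noteq> f q via_a"
      using mover_b_leaves_origin via_a_unchanged[OF mover_facts(4)] mover_facts(5,6) by auto
    show "f x target \<noteq> f x via_a"
      using assms via_a_unchanged by simp
  qed
  then show ?thesis
    using mover_facts(3) by simp
qed

lemma third_switcher_pins_b:
  assumes "x \<in> {1..n}" "x \<noteq> p" "x \<noteq> q" "f x target \<noteq> f x v"
  shows "f q target = c"
proof -
  interpret swapped: double_move n k f v b a c d q p
    by (rule roles_swapped)
  show ?thesis
    using swapped.third_switcher_pins_a assms target_swapped by simp
qed

lemma third_switcher_unique: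
  assumes "x \<in> {1..n}" "x \<noteq> p" "x \<noteq> q" "f x target \<noteq> f x v"
    and "y \<in> {1..n}" "y \<noteq> p" "y \<noteq> q" "f y target \<noteq> f y v"
  shows "x = y"
proof (rule ccontr)
  assume "x \<noteq> y"
  have "f y target = f y via_a"
  proof (rule no_three_switchers_to_target[OF mover_facts(4) assms(1) assms(5)])
    show "distinct [q, x, y]"
      using assms(3,7) \<open>x \<noteq> y\<close> by auto
    show "f q target \<noteq> f q via_a"
      using mover_b_leaves_origin via_a_unchanged[OF mover_facts(4)] mover_facts(5,6) by auto
    show "f x target \<noteq> f x via_a"
      using assms(1-4) via_a_unchanged by simp
  qed
  then show False
    using assms(5-8) via_a_unchanged by simp
qed

lemma relay_agent_origin:
  assumes g: "g \<in> {1..n}" and pq: "f p target = c" "f q target = c"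
    and others: "\<forall>x\<in>{1..n}. x \<noteq> p \<and> x \<noteq> q \<and> x \<noteq> g \<longrightarrow> f x target = f x v"
  shows "f g v = c"
proof (rule ccontr)
  \<comment> \<open>otherwise c would gain p and q and lose nobody\<close>
  assume "f g v \<noteq> c"
  then have "insert p (insert q {x\<in>{1..n}. f x v = c}) \<subseteq> {x\<in>{1..n}. f x target = c}"
    using pq others mover_facts by auto
  then have "card (insert p (insert q {x\<in>{1..n}. f x v = c})) \<le> target c"
    using card_mono[of "{x\<in>{1..n}. f x target = c}"] card_agents_on_task[OF demand_target tasks(3)]
    by simp
  moreover have "card (insert p (insert q {x\<in>{1..n}. f x v = c})) = v c + 2"
    using mover_facts distinct_tasks card_agents_on_task[OF demand_v tasks(3)] by simp
  moreover have "target c = v c + 1"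
    using distinct_tasks by (simp add: move_def)
  ultimately show False
    by simp
qed

lemma double_move_cases:
  obtains (direct) "pair_relocated v target p q c d"
    | (relay) g where "g \<in> {1..n}" "g \<noteq> p" "g \<noteq> q" "f g v = c" "f g target = d"
        "f p target = c" "f q target = c"
        "\<forall>x\<in>{1..n}. x \<noteq> p \<and> x \<noteq> q \<and> x \<noteq> g \<longrightarrow> f x target = f x v"
proof -
  have gain: "v c < target c" "v d < target d"
    using distinct_tasks by (simp_all add: move_def)
  obtain mc where mc: "mc \<in> {1..n}" "f mc target = c" "f mc v \<noteq> c"
    using agent_leaves_task[OF demand_target demand_v tasks(3) gain(1)] by blast
  obtain md where md: "md \<in> {1..n}" "f md target = d" "f md v \<noteq> d"
    using agent_leaves_task[OF demand_target demand_v tasks(4) gain(2)] by blast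
  show ?thesis
  proof (cases "\<exists>x\<in>{1..n}. x \<noteq> p \<and> x \<noteq> q \<and> f x target \<noteq> f x v")
    case False
    then have unchanged: "\<forall>y\<in>{1..n}. y \<noteq> p \<and> y \<noteq> q \<longrightarrow> f y target = f y v"
      by blast
    have "mc \<in> {p, q}" "md \<in> {p, q}"
      using unchanged mc md by auto
    moreover have "mc \<noteq> md"
      using mc(2) md(2) distinct_tasks by auto
    ultimately have "{f p target, f q target} = {c, d}"
      using mc(2) md(2) by auto
    then show ?thesis
      using unchanged direct unfolding pair_relocated_def by blast
  next
    case True
    then obtain x where x: "x \<in> {1..n}" "x \<noteq> p" "x \<noteq> q" "f x target \<noteq> f x v"
      by blast
    have pq: "f p target = c" "f q target = c"
      using third_switcher_pins_a[OF x] third_switcher_pins_b[OF x] .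
    then have md_third: "md \<noteq> p" "md \<noteq> q"
      using md distinct_tasks by auto
    then have others: "\<forall>y\<in>{1..n}. y \<noteq> p \<and> y \<noteq> q \<and> y \<noteq> md \<longrightarrow> f y target = f y v"
      using third_switcher_unique md by metis
    show ?thesis
      by (rule relay[OF md(1) md_third relay_agent_origin[OF md(1) pq others] md(2) pq others])
  qed
qed

lemma other_task_preserved:
  assumes "x \<in> {1..n}" "e \<notin> {a, b, c, d}"
  shows "f x target = e \<longleftrightarrow> f x v = e"
proof (cases rule: double_move_cases)
  case direct
  have "f p target \<in> {c, d}" "f q target \<in> {c, d}"
    using pair_relocated_values[OF direct] distinct_tasks by simp_all
  then show ?thesis
    using pair_relocated_unchanged[OF direct assms(1)] assms(2) mover_facts(2,5)
    by (cases "x = p \<or> x = q") auto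
next
  case (relay g)
  then show ?thesis
    using assms mover_facts(2,5) by (cases "x = p \<or> x = q \<or> x = g") auto
qed

end

context task_allocation
begin

lemma type1_excludes_relay:
  assumes E: "double_move n k f v a b T u p q"
    and other: "type1 n k f v T'" "T' \<in> {1..k}" "distinct [T, T', a, b, u]"
  shows "pair_relocated v (move (move v a T) b u) p q T u"
proof -
  interpret E: double_move n k f v a b T u p q
    by (fact E)
  obtain p' q' where "sole_mover v a T' p'" "sole_mover v b T' q'"
    using type1_sole_mover[OF E.demand_v other(1,2)] E.tasks E.nonempty other(3)
    by (metis distinct_length_2_or_more)
  then interpret A: double_move n k f v a b T' u p' q'
    by unfold_locales (use E.demand_v E.tasks E.nonempty other in auto)
  show ?thesis
  proof (cases rule: E.double_move_cases)
    case direct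
    then show ?thesis .
  next
    case (relay g)
    \<comment> \<open>A is adjacent to E, and p, q and g would all switch between them\<close>
    have A_from_E: "A.target = move E.target T T'"
      using other(3) by (auto simp: move_def fun_eq_iff)
    have T_fresh: "T \<notin> {a, b, T', u}"
      using other(3) by auto
    have g_back: "f g A.target = T"
      using A.other_task_preserved[OF relay(1) T_fresh] relay(4) by simp
    have "f g (move E.target T T') = f g E.target"
    proof (rule no_three_switchers[OF E.demand_target E.tasks(3) other(2) _ _
          E.mover_facts(1,4) relay(1)])
      show "T \<noteq> T'" "1 \<le> E.target T"
        using other(3) by (simp_all add: move_def)
      show "distinct [p, q, g]"
        using E.mover_facts(6) relay(2,3) by simp
      show "f p (move E.target T T') \<noteq> f p E.target" "f q (move E.target T T') \<noteq> f q E.target"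
        using A.other_task_preserved[OF E.mover_facts(1) T_fresh]
          A.other_task_preserved[OF E.mover_facts(4) T_fresh]
          E.mover_facts(2,5) relay(6,7) A_from_E other(3) by auto
    qed
    then show ?thesis
      using g_back relay(5) A_from_E other(3) by simp
  qed
qed

lemma pair_relocated_propagates:
  assumes E: "double_move n k f v a b T u p q" and B: "double_move n k f v a c T u p r"
    and "b \<noteq> c" and relocated: "pair_relocated v (move (move v a T) b u) p q T u"
  shows "pair_relocated v (move (move v a T) c u) p r T u"
proof -
  interpret E: double_move n k f v a b T u p q
    by (fact E)
  interpret B: double_move n k f v a c T u p r
    by (fact B)
  have distinct: "distinct [a, b, c, T, u]"
    using E.distinct_tasks B.distinct_tasks \<open>b \<noteq> c\<close> by auto
  have r: "r \<noteq> p" "r \<noteq> q"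
    using B.mover_facts(5,6) E.mover_facts(5) \<open>b \<noteq> c\<close> by auto
  note E_unchanged = pair_relocated_unchanged[OF relocated]
  have r_E: "f r E.target = c"
    using E_unchanged[OF B.mover_facts(4) r] B.mover_facts(5) by simp
  have q_E: "f q E.target \<in> {T, u}"
    using pair_relocated_values[OF relocated] distinct by simp
  show ?thesis
  proof (cases rule: B.double_move_cases)
    case direct
    then show ?thesis .
  next
    case (relay g)
    have "g \<noteq> q"
      using relay(4) E.mover_facts(5) distinct by auto
    have q_B: "f q B.target = b"
      using relay(8) E.mover_facts(4,5,6) r \<open>g \<noteq> q\<close> by auto
    have g_E: "f g E.target = T"
      using E_unchanged[OF relay(1,2) \<open>g \<noteq> q\<close>] relay(4) by simp
    have B_from_E: "B.target = move E.target c b"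
      using distinct E.nonempty(2) by (auto simp: move_def fun_eq_iff)
    have "f q (move E.target c b) = f q E.target"
    proof (rule no_three_switchers[OF E.demand_target B.tasks(2) E.tasks(2) _ _
          B.mover_facts(4) relay(1) E.mover_facts(4)])
      show "c \<noteq> b" "1 \<le> E.target c"
        using distinct B.nonempty(2) by (auto simp: move_def)
      show "distinct [r, g, q]"
        using relay(3) r(2) \<open>g \<noteq> q\<close> by auto
      show "f r (move E.target c b) \<noteq> f r E.target" "f g (move E.target c b) \<noteq> f g E.target"
        using r_E g_E relay(5,7) B_from_E distinct by auto
    qed
    then show ?thesis
      using q_B q_E B_from_E distinct by auto
  qed
qed

lemma relocations_triangle:
  assumes E: "double_move n k f v a b T u p q" and B: "double_move n k f v a c T u p r"
    and "b \<noteq> c"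
    and rel_E: "pair_relocated v (move (move v a T) b u) p q T u"
    and rel_B: "pair_relocated v (move (move v a T) c u) p r T u"
    and rel_C: "pair_relocated v (move (move v b T) c u) q r T u"
  shows False
proof -
  interpret E: double_move n k f v a b T u p q
    by (fact E)
  interpret B: double_move n k f v a c T u p r
    by (fact B)
  define C where "C = move (move v b T) c u"
  have distinct: "distinct [a, b, c, T, u]"
    using E.distinct_tasks B.distinct_tasks \<open>b \<noteq> c\<close> by auto
  have agents: "p \<noteq> q" "p \<noteq> r" "q \<noteq> r"
    using E.mover_facts(5,6) B.mover_facts(5,6) \<open>b \<noteq> c\<close> by auto
  have r_E: "f r E.target = c"
    using pair_relocated_unchanged[OF rel_E B.mover_facts(4)] agents B.mover_facts(5) by simp
  have q_B: "f q B.target = b"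
    using pair_relocated_unchanged[OF rel_B E.mover_facts(4)] agents E.mover_facts(5) by simp
  have p_C: "f p C = a"
    using pair_relocated_unchanged[OF rel_C[folded C_def] E.mover_facts(1)] agents
      E.mover_facts(2) by simp
  have "T \<noteq> u"
    using distinct by simp
  note landing = pair_relocated_values[OF rel_E this] pair_relocated_values[OF rel_B this]
    pair_relocated_values[OF rel_C[folded C_def] this]
  have B_from_E: "B.target = move E.target c b" and C_from_E: "C = move E.target c a"
    and C_from_B: "C = move B.target b a"
    using distinct E.nonempty unfolding C_def by (auto simp: move_def fun_eq_iff)
  have E_c: "1 \<le> E.target c" and B_b: "1 \<le> B.target b"
    using distinct E.nonempty(2) B.nonempty(2) by (auto simp: move_def)
  \<comment> \<open>each carrier keeps its task between the two vectors in which it is not a carrier\<close>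
  have "f p B.target = f p E.target"
    unfolding B_from_E
  proof (rule no_three_switchers[OF E.demand_target B.tasks(2) E.tasks(2) _ E_c
        E.mover_facts(4) B.mover_facts(4) E.mover_facts(1)])
    show "c \<noteq> b" "distinct [q, r, p]"
      using distinct agents by auto
    have "b \<notin> {T, u}" "c \<notin> {T, u}"
      using distinct by auto
    then show "f q (move E.target c b) \<noteq> f q E.target" "f r (move E.target c b) \<noteq> f r E.target"
      using q_B r_E landing(2,5) unfolding B_from_E by metis+
  qed
  moreover have "f q C = f q E.target"
    unfolding C_from_E
  proof (rule no_three_switchers[OF E.demand_target B.tasks(2) E.tasks(1) _ E_c
        E.mover_facts(1) B.mover_facts(4) E.mover_facts(4)])
    show "c \<noteq> a" "distinct [p, r, q]"
      using distinct agents by auto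
    have "a \<notin> {T, u}" "c \<notin> {T, u}"
      using distinct by auto
    then show "f p (move E.target c a) \<noteq> f p E.target" "f r (move E.target c a) \<noteq> f r E.target"
      using p_C r_E landing(1,8) unfolding C_from_E by metis+
  qed
  moreover have "f r C = f r B.target"
    unfolding C_from_B
  proof (rule no_three_switchers[OF B.demand_target E.tasks(2) E.tasks(1) _ B_b
        E.mover_facts(1) E.mover_facts(4) B.mover_facts(4)])
    show "b \<noteq> a" "distinct [p, q, r]"
      using distinct agents by auto
    have "a \<notin> {T, u}" "b \<notin> {T, u}"
      using distinct by auto
    then show "f p (move B.target b a) \<noteq> f p B.target" "f q (move B.target b a) \<noteq> f q B.target"
      using p_C q_B landing(4,7) unfolding C_from_B by metis+
  qed
  ultimately have "f p E.target \<noteq> f q E.target" "f p E.target \<noteq> f r B.target"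
    "f q E.target \<noteq> f r B.target"
    using landing(3,6,9) by metis+
  then show False
    using landing(1,2,5) by auto
qed

lemma two_type1_tasks_impossible:
  assumes v: "demand_vec n k v"
    and tasks: "T1 \<in> {1..k}" "T2 \<in> {1..k}" "a \<in> {1..k}" "b \<in> {1..k}" "c \<in> {1..k}" "u \<in> {1..k}"
    and distinct: "distinct [T1, T2, a, b, u]" "distinct [T1, a, b, c, u]"
    and nonempty: "1 \<le> v a" "1 \<le> v b" "1 \<le> v c"
    and type1: "type1 n k f v T1" "type1 n k f v T2"
  shows False
proof -
  obtain p q r where movers: "sole_mover v a T1 p" "sole_mover v b T1 q" "sole_mover v c T1 r"
    using type1_sole_mover[OF v type1(1) tasks(1)] tasks distinct(2) nonempty
    by (metis distinct_length_2_or_more)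
  have E: "double_move n k f v a b T1 u p q" and E': "double_move n k f v b a T1 u q p"
    and B: "double_move n k f v a c T1 u p r" and C: "double_move n k f v b c T1 u q r"
    by (unfold_locales; use v tasks distinct(2) nonempty movers in auto)+
  have "b \<noteq> c" "a \<noteq> c"
    using distinct(2) by auto
  have rel_E: "pair_relocated v (move (move v a T1) b u) p q T1 u"
    using type1_excludes_relay[OF E type1(2) tasks(2)] distinct(1) by auto
  then have rel_E': "pair_relocated v (move (move v b T1) a u) q p T1 u"
    using move_move_exchange_targets[of a b T1 u v] distinct(1)
    unfolding pair_relocated_def by (auto simp: insert_commute)
  show False
    by (rule relocations_triangle[OF E B \<open>b \<noteq> c\<close> rel_E
          pair_relocated_propagates[OF E B \<open>b \<noteq> c\<close> rel_E]
          pair_relocated_propagates[OF E' C \<open>a \<noteq> c\<close> rel_E']])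
qed

end

lemma five_task_configuration:
  fixes k :: nat
  assumes N: "finite N" "4 \<le> card N" "N \<subseteq> {1..k}" and "5 \<le> k"
    and "T1 \<noteq> T2" "T2 \<in> N \<or> T1 \<notin> N"
  obtains a b c u where "a \<in> N" "b \<in> N" "c \<in> N" "u \<in> {1..k}"
    "distinct [T1, T2, a, b, u]" "distinct [T1, a, b, c, u]"
proof (cases "T2 \<in> N")
  case True
  \<comment> \<open>c := T2, so only four tasks need to be avoided by u\<close>
  obtain a where "a \<in> N" "a \<notin> set [T1, T2]"
    using exists_not_in_list[OF N(1), of "[T1, T2]"] N(2) by auto
  moreover obtain b where "b \<in> N" "b \<notin> set [T1, T2, a]"
    using exists_not_in_list[OF N(1), of "[T1, T2, a]"] N(2) by auto
  moreover obtain u where "u \<in> {1..k}" "u \<notin> set [T1, T2, a, b]"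
    using exists_not_in_list[of "{1..k}" "[T1, T2, a, b]"] \<open>5 \<le> k\<close> by auto
  ultimately show ?thesis
    using that[of a b T2 u] True \<open>T1 \<noteq> T2\<close> by auto
next
  case False
  then have "T1 \<notin> N" "T2 \<notin> N"
    using assms(6) by auto
  obtain a where "a \<in> N"
    using exists_not_in_list[OF N(1), of "[]"] N(2) by auto
  moreover obtain b where "b \<in> N" "b \<notin> set [a]"
    using exists_not_in_list[OF N(1), of "[a]"] N(2) by auto
  moreover obtain c where "c \<in> N" "c \<notin> set [a, b]"
    using exists_not_in_list[OF N(1), of "[a, b]"] N(2) by auto
  moreover obtain u where "u \<in> N" "u \<notin> set [a, b, c]"
    using exists_not_in_list[OF N(1), of "[a, b, c]"] N(2) by auto
  moreover have "u \<in> {1..k}"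
    using \<open>u \<in> N\<close> N(3) by blast
  ultimately show ?thesis
    using that[of a b c u] \<open>T1 \<notin> N\<close> \<open>T2 \<notin> N\<close> \<open>T1 \<noteq> T2\<close> by auto
qed

theorem lemma4p5:
  fixes n k :: nat and f :: "nat \<Rightarrow> (nat \<Rightarrow> nat) \<Rightarrow> nat" and v :: "nat \<Rightarrow> nat"
  assumes "n \<ge> 4" and "k \<ge> 5"
    and "satisfies_demand n k f"
    and "max_switch_le2 n k f"
    and "demand_vec n k v"
    and "card {j\<in>{1..k}. v j \<noteq> 0} \<ge> 4"
  shows "card {t\<in>{1..k}. type1 n k f v t} \<le> 1"
proof (rule ccontr)
  interpret task_allocation n k f
    using assms(3,4) by unfold_locales
  define N where "N = {j\<in>{1..k}. v j \<noteq> 0}"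
  assume "\<not> card {t\<in>{1..k}. type1 n k f v t} \<le> 1"
  then obtain t t' where "t \<in> {1..k}" "t' \<in> {1..k}" "t \<noteq> t'" "type1 n k f v t" "type1 n k f v t'"
    by (auto simp: card_le_Suc0_iff_eq)
  then obtain T1 T2 where T: "T1 \<in> {1..k}" "T2 \<in> {1..k}" "T1 \<noteq> T2"
    "type1 n k f v T1" "type1 n k f v T2" "T2 \<in> N \<or> T1 \<notin> N"
    by metis \<comment> \<open>swap t and t' if necessary\<close>
  have N: "finite N" "4 \<le> card N" "N \<subseteq> {1..k}"
    using assms(6) unfolding N_def by auto
  obtain a b c u where "a \<in> N" "b \<in> N" "c \<in> N" "u \<in> {1..k}"
    "distinct [T1, T2, a, b, u]" "distinct [T1, a, b, c, u]"
    using five_task_configuration[OF N assms(2) T(3,6)] by blast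
  then show False
    by (intro two_type1_tasks_impossible[of v T1 T2 a b c u]) (use assms(5) T N_def in auto)
qed

end
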